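(* Let $(X,T)$ be a topological dynamical system and $c_S^n$ a system of coefficients for which the limits defining $\operatorname{Asc}$ and $\operatorname{Int}$ exist. For each open cover $\mathscr U$ of $X$, $\operatorname{Asc}(X,\mathscr U,T)\le h_{\mathrm{top}}(X,T)$, and moreover $\operatorname{Int}(X,\mathscr U,T)\le h_{\mathrm{top}}(X,\mathscr U,T)\le h_{\mathrm{top}}(X,T)$.
   Context: A system of coefficients is a family $\{c_S^n:n\in\mathbb N,S\subset n^*\}$ with $c_S^n\ge0$, $\sum_{S\subset n^*}c_S^n=1$, $c_{S^c}^n=c_S^n$, where $n^*=\{0,\dots,n-1\}$, $S^c=n^*\setminus S$ (the limits below exist e.g. when $c_S^n=\int x^{|S|}(1-x)^{n-|S|}\lambda(dx)$ for a symmetric probability measure $\lambda$ on $[0,1]$). $(X,T)$: compact Hausdorff, $T$ continuous; $\mathscr U_S=\bigvee_{i\in S}T^{-i}\mathscr U$; $N$ = minimal subcover cardinality. $\operatorname{Asc}(X,\mathscr U,T)=\lim_n\frac1n\sum_Sc_S^n\log N(\mathscr U_S)$, $\operatorname{Int}(X,\mathscr U,T)=\lim_n\frac1n\sum_Sc_S^n\log\frac{N(\mathscr U_S)N(\mathscr U_{S^c})}{N(\mathscr U_{n^*})}$, $h_{\mathrm{top}}(X,\mathscr U,T)=\lim_n\frac1n\log N(\mathscr U_{n^*})$, $h_{\mathrm{top}}(X,T)=\sup_{\mathscr U}h_{\mathrm{top}}(X,\mathscr U,T)$. *)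

theory Defs
  imports "HOL-Analysis.Analysis"
begin

definition tds :: "'a topology \<Rightarrow> ('a \<Rightarrow> 'a) \<Rightarrow> bool" where
  "tds X T \<longleftrightarrow> compact_space X \<and> Hausdorff_space X \<and> continuous_map X X T"

definition open_cover :: "'a topology \<Rightarrow> 'a set set \<Rightarrow> bool" where
  "open_cover X \<U> \<longleftrightarrow> (\<forall>U\<in>\<U>. openin X U) \<and> \<Union>\<U> = topspace X"

text \<open>The join of the covers T^{-i} U for i in S (the trivial cover {X} if S is empty).\<close>
definition join_cover :: "'a topology \<Rightarrow> ('a \<Rightarrow> 'a) \<Rightarrow> 'a set set \<Rightarrow> nat set \<Rightarrow> 'a set set" where
  "join_cover X T \<U> S =
     {topspace X \<inter> (\<Inter>i\<in>S. (T ^^ i) -` f i) | f. \<forall>i\<in>S. f i \<in> \<U>}"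

definition cover_number :: "'a topology \<Rightarrow> 'a set set \<Rightarrow> nat" where
  "cover_number X \<V> = Inf {card \<W> | \<W>. \<W> \<subseteq> \<V> \<and> finite \<W> \<and> topspace X \<subseteq> \<Union>\<W>}"

text \<open>System of coefficients c n S for S a subset of n* = {0..<n}.\<close>
definition coeff_system :: "(nat \<Rightarrow> nat set \<Rightarrow> real) \<Rightarrow> bool" where
  "coeff_system c \<longleftrightarrow>
     (\<forall>n\<ge>1. (\<forall>S\<subseteq>{..<n}. c n S \<ge> 0 \<and> c n ({..<n} - S) = c n S)
            \<and> (\<Sum>S\<in>Pow {..<n}. c n S) = 1)"

definition asc_seq :: "(nat \<Rightarrow> nat set \<Rightarrow> real) \<Rightarrow> 'a topology \<Rightarrow> 'a set set \<Rightarrow> ('a \<Rightarrow> 'a) \<Rightarrow> nat \<Rightarrow> real" where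
  "asc_seq c X \<U> T n =
     (1 / real n) * (\<Sum>S\<in>Pow {..<n}. c n S * ln (real (cover_number X (join_cover X T \<U> S))))"

definition int_seq :: "(nat \<Rightarrow> nat set \<Rightarrow> real) \<Rightarrow> 'a topology \<Rightarrow> 'a set set \<Rightarrow> ('a \<Rightarrow> 'a) \<Rightarrow> nat \<Rightarrow> real" where
  "int_seq c X \<U> T n =
     (1 / real n) * (\<Sum>S\<in>Pow {..<n}. c n S *
        ln (real (cover_number X (join_cover X T \<U> S)) *
            real (cover_number X (join_cover X T \<U> ({..<n} - S))) /
            real (cover_number X (join_cover X T \<U> {..<n}))))"

definition Asc :: "(nat \<Rightarrow> nat set \<Rightarrow> real) \<Rightarrow> 'a topology \<Rightarrow> 'a set set \<Rightarrow> ('a \<Rightarrow> 'a) \<Rightarrow> real" where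
  "Asc c X \<U> T = lim (asc_seq c X \<U> T)"

definition Int_ent :: "(nat \<Rightarrow> nat set \<Rightarrow> real) \<Rightarrow> 'a topology \<Rightarrow> 'a set set \<Rightarrow> ('a \<Rightarrow> 'a) \<Rightarrow> real" where
  "Int_ent c X \<U> T = lim (int_seq c X \<U> T)"

definition htop_cover :: "'a topology \<Rightarrow> 'a set set \<Rightarrow> ('a \<Rightarrow> 'a) \<Rightarrow> real" where
  "htop_cover X \<U> T = lim (\<lambda>n. (1 / real n) * ln (real (cover_number X (join_cover X T \<U> {..<n}))))"

definition htop :: "'a topology \<Rightarrow> ('a \<Rightarrow> 'a) \<Rightarrow> ereal" where
  "htop X T = (SUP \<U>\<in>{\<U>. open_cover X \<U>}. ereal (htop_cover X \<U> T))"

end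

theory Submission
  imports Defs
begin

text \<open>Write N(S) for the cover number of the join of the covers T^-i \<U>, i \<in> S. Enlarging S
  refines the join, so N(S) \<le> N(n*) and the average of log N(S) defining Asc is at most log N(n*).
  Since the weights are invariant under S \<mapsto> n* - S and sum to 1, the sequence defining Int is
  exactly twice the one defining Asc minus the one defining h_top(X,\<U>,T). In the limit,
  h_top(X,\<U>,T) = 2 Asc - Int together with Asc \<le> h_top(X,\<U>,T) gives both inequalities.\<close>

lemma sum_Pow_Diff: "(\<Sum>S\<in>Pow A. g (A - S)) = (\<Sum>S\<in>Pow A. g S)"
  by (rule sum.reindex_bij_witness[of _ "\<lambda>S. A - S" "\<lambda>S. A - S"]) auto

lemma symmetric_average_complement_split:
  fixes w L :: "'b set \<Rightarrow> real"
  assumes "\<And>S. S \<subseteq> A \<Longrightarrow> w (A - S) = w S" and "(\<Sum>S\<in>Pow A. w S) = 1"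
  shows "(\<Sum>S\<in>Pow A. w S * (L S + L (A - S) - L A)) = 2 * (\<Sum>S\<in>Pow A. w S * L S) - L A"
proof -
  have "(\<Sum>S\<in>Pow A. w S * L (A - S)) = (\<Sum>S\<in>Pow A. w (A - S) * L (A - S))"
    using assms(1) by (intro sum.cong) auto
  also have "\<dots> = (\<Sum>S\<in>Pow A. w S * L S)"
    by (rule sum_Pow_Diff)
  finally have "(\<Sum>S\<in>Pow A. w S * L (A - S)) = (\<Sum>S\<in>Pow A. w S * L S)" .
  moreover have "(\<Sum>S\<in>Pow A. w S * L A) = L A"
    using assms(2) by (simp add: sum_distrib_right[symmetric])
  ultimately show ?thesis
    by (simp add: algebra_simps sum.distrib sum_subtractf)
qed

lemma convex_combination_le:
  fixes w f :: "'b \<Rightarrow> real"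
  assumes "\<And>i. i \<in> I \<Longrightarrow> 0 \<le> w i" and "sum w I = 1" and "\<And>i. i \<in> I \<Longrightarrow> f i \<le> M"
  shows "(\<Sum>i\<in>I. w i * f i) \<le> M"
proof -
  have "(\<Sum>i\<in>I. w i * f i) \<le> (\<Sum>i\<in>I. w i * M)"
    using assms(1,3) by (intro sum_mono mult_left_mono)
  also have "\<dots> = M"
    using assms(2) by (simp add: sum_distrib_right[symmetric])
  finally show ?thesis .
qed

lemma continuous_map_funpow: "continuous_map X X T \<Longrightarrow> continuous_map X X (T ^^ n)"
  by (induction n) (auto intro: continuous_map_compose[of X X _ X T, simplified])

lemma cover_number_le:
  assumes "\<W> \<subseteq> \<V>" "finite \<W>" "topspace X \<subseteq> \<Union>\<W>"
  shows "cover_number X \<V> \<le> card \<W>"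
  unfolding cover_number_def using assms by (intro cInf_lower) auto

lemma cover_number_empty_space: "topspace X = {} \<Longrightarrow> cover_number X \<V> = 0"
  using cover_number_le[of "{}" \<V> X] by simp

lemma cover_number_attained:
  assumes "compact_space X" "\<forall>V\<in>\<V>. openin X V" "topspace X \<subseteq> \<Union>\<V>"
  obtains \<W> where "\<W> \<subseteq> \<V>" "finite \<W>" "topspace X \<subseteq> \<Union>\<W>" "cover_number X \<V> = card \<W>"
proof -
  let ?K = "{card \<W> | \<W>. \<W> \<subseteq> \<V> \<and> finite \<W> \<and> topspace X \<subseteq> \<Union>\<W>}"
  \<comment> \<open>compactness makes \<open>?K\<close> nonempty; otherwise \<open>Inf ?K = 0\<close> would be a junk value\<close>
  have "\<exists>\<F>. finite \<F> \<and> \<F> \<subseteq> \<V> \<and> topspace X \<subseteq> \<Union>\<F>"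
    by (rule assms(1)[unfolded compact_space_alt, rule_format]) (intro conjI assms(2,3))
  then have "?K \<noteq> {}"
    by blast
  then have "Inf ?K \<in> ?K"
    by (rule Inf_nat_def1)
  then show ?thesis
    using that unfolding cover_number_def by (auto simp only: mem_Collect_eq)
qed

lemma cover_number_pos:
  assumes "compact_space X" "\<forall>V\<in>\<V>. openin X V" "topspace X \<subseteq> \<Union>\<V>" "topspace X \<noteq> {}"
  shows "0 < cover_number X \<V>"
proof -
  obtain \<W> where \<W>: "\<W> \<subseteq> \<V>" "finite \<W>" "topspace X \<subseteq> \<Union>\<W>" "cover_number X \<V> = card \<W>"
    by (rule cover_number_attained[OF assms(1-3)])
  have "\<W> \<noteq> {}"
    using \<W>(3) assms(4) by auto
  then show ?thesis
    using \<W>(2,4) by (simp add: card_gt_0_iff)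
qed

lemma cover_number_le_refinement:
  assumes "compact_space X" "\<forall>V\<in>\<V>. openin X V" "topspace X \<subseteq> \<Union>\<V>"
    and "\<forall>V\<in>\<V>. \<exists>V'\<in>\<V>'. V \<subseteq> V'"
  shows "cover_number X \<V>' \<le> cover_number X \<V>"
proof -
  obtain \<W> where \<W>: "\<W> \<subseteq> \<V>" "finite \<W>" "topspace X \<subseteq> \<Union>\<W>" "cover_number X \<V> = card \<W>"
    by (rule cover_number_attained[OF assms(1-3)])
  have "\<forall>V\<in>\<W>. \<exists>V'. V' \<in> \<V>' \<and> V \<subseteq> V'"
    using assms(4) \<W>(1) by blast
  then obtain g where g: "\<forall>V\<in>\<W>. g V \<in> \<V>' \<and> V \<subseteq> g V"
    by (rule bchoice[elim_format]) blast
  have "cover_number X \<V>' \<le> card (g ` \<W>)"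
    using g \<W>(2,3) by (intro cover_number_le) (auto, blast)
  also have "\<dots> \<le> card \<W>"
    using \<W>(2) by (rule card_image_le)
  finally show ?thesis
    using \<W>(4) by simp
qed

lemma openin_join_cover:
  assumes "continuous_map X X T" "open_cover X \<U>" "finite S" "A \<in> join_cover X T \<U> S"
  shows "openin X A"
proof -
  obtain f where A: "A = topspace X \<inter> (\<Inter>i\<in>S. (T ^^ i) -` f i)" and f: "\<forall>i\<in>S. f i \<in> \<U>"
    using assms(4) unfolding join_cover_def by blast
  have "openin X {x \<in> topspace X. (T ^^ i) x \<in> f i}" if "i \<in> S" for i
    using continuous_map_funpow[OF assms(1)]
  proof (rule openin_continuous_map_preimage)
    show "openin X (f i)"
      using f assms(2) that by (simp add: open_cover_def)
  qed
  then have "openin X ((\<Inter>i\<in>S. {x \<in> topspace X. (T ^^ i) x \<in> f i}) \<inter> topspace X)"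
    using assms(3) by (intro openin_INT)
  moreover have "A = (\<Inter>i\<in>S. {x \<in> topspace X. (T ^^ i) x \<in> f i}) \<inter> topspace X"
    using A by auto
  ultimately show ?thesis
    by simp
qed

lemma join_cover_covers:
  assumes "continuous_map X X T" "open_cover X \<U>"
  shows "topspace X \<subseteq> \<Union>(join_cover X T \<U> S)"
proof
  fix x assume x: "x \<in> topspace X"
  have "(T ^^ i) x \<in> \<Union>\<U>" for i
    using continuous_map_funpow[OF assms(1)] x assms(2)
    by (simp add: continuous_map_def Pi_iff open_cover_def)
  then have "\<forall>i. \<exists>U\<in>\<U>. (T ^^ i) x \<in> U"
    by blast
  then obtain f where f: "\<forall>i. f i \<in> \<U> \<and> (T ^^ i) x \<in> f i"
    by metis
  then have "topspace X \<inter> (\<Inter>i\<in>S. (T ^^ i) -` f i) \<in> join_cover X T \<U> S"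
    unfolding join_cover_def by blast
  then show "x \<in> \<Union>(join_cover X T \<U> S)"
    using f x by blast
qed

lemma join_cover_refines:
  assumes "S \<subseteq> S'" "A \<in> join_cover X T \<U> S'"
  shows "\<exists>B\<in>join_cover X T \<U> S. A \<subseteq> B"
proof -
  obtain f where A: "A = topspace X \<inter> (\<Inter>i\<in>S'. (T ^^ i) -` f i)" and f: "\<forall>i\<in>S'. f i \<in> \<U>"
    using assms(2) unfolding join_cover_def by blast
  have "topspace X \<inter> (\<Inter>i\<in>S. (T ^^ i) -` f i) \<in> join_cover X T \<U> S"
    using f assms(1) unfolding join_cover_def by blast
  moreover have "A \<subseteq> topspace X \<inter> (\<Inter>i\<in>S. (T ^^ i) -` f i)"
    using A assms(1) by blast
  ultimately show ?thesis
    by blast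
qed

lemma cover_number_join_cover_mono:
  assumes "tds X T" "open_cover X \<U>" "finite S'" "S \<subseteq> S'"
  shows "cover_number X (join_cover X T \<U> S) \<le> cover_number X (join_cover X T \<U> S')"
proof (rule cover_number_le_refinement)
  have X: "compact_space X" "continuous_map X X T"
    using assms(1) unfolding tds_def by simp_all
  then show "compact_space X"
    by simp
  show "\<forall>V\<in>join_cover X T \<U> S'. openin X V"
    using openin_join_cover[OF X(2) assms(2,3)] by blast
  show "topspace X \<subseteq> \<Union>(join_cover X T \<U> S')"
    using X(2) assms(2) by (rule join_cover_covers)
  show "\<forall>A\<in>join_cover X T \<U> S'. \<exists>B\<in>join_cover X T \<U> S. A \<subseteq> B"
    using join_cover_refines[OF assms(4)] by blast
qed

lemma cover_number_join_cover_pos: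
  assumes "tds X T" "open_cover X \<U>" "finite S" "topspace X \<noteq> {}"
  shows "0 < cover_number X (join_cover X T \<U> S)"
proof (rule cover_number_pos)
  have X: "compact_space X" "continuous_map X X T"
    using assms(1) unfolding tds_def by simp_all
  then show "compact_space X"
    by simp
  show "\<forall>V\<in>join_cover X T \<U> S. openin X V"
    using openin_join_cover[OF X(2) assms(2,3)] by blast
  show "topspace X \<subseteq> \<Union>(join_cover X T \<U> S)"
    using X(2) assms(2) by (rule join_cover_covers)
qed (fact assms(4))

abbreviation join_cover_number :: "'a topology \<Rightarrow> ('a \<Rightarrow> 'a) \<Rightarrow> 'a set set \<Rightarrow> nat set \<Rightarrow> real" where
  "join_cover_number X T \<U> S \<equiv> real (cover_number X (join_cover X T \<U> S))"

definition cover_entropy_seq :: "'a topology \<Rightarrow> 'a set set \<Rightarrow> ('a \<Rightarrow> 'a) \<Rightarrow> nat \<Rightarrow> real" where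
  "cover_entropy_seq X \<U> T n = (1 / real n) * ln (join_cover_number X T \<U> {..<n})"

lemma htop_cover_eq_lim: "htop_cover X \<U> T = lim (cover_entropy_seq X \<U> T)"
  unfolding htop_cover_def cover_entropy_seq_def ..

lemma htop_cover_le_htop: "open_cover X \<U> \<Longrightarrow> ereal (htop_cover X \<U> T) \<le> htop X T"
  unfolding htop_def by (rule SUP_upper) simp

lemma ln_join_cover_number_split:
  assumes "tds X T" "open_cover X \<U>" "finite A" "S \<subseteq> A"
  shows "ln (join_cover_number X T \<U> S * join_cover_number X T \<U> (A - S) / join_cover_number X T \<U> A)
    = ln (join_cover_number X T \<U> S) + ln (join_cover_number X T \<U> (A - S)) - ln (join_cover_number X T \<U> A)"
proof (cases "topspace X = {}")
  case True
  then show ?thesis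
    by (simp add: cover_number_empty_space)
next
  case False
  have "0 < cover_number X (join_cover X T \<U> S')" if "finite S'" for S'
    using assms(1,2) that False by (rule cover_number_join_cover_pos)
  then show ?thesis
    using assms(3,4) by (simp add: ln_mult ln_div finite_subset)
qed

lemma ln_join_cover_number_mono:
  assumes "tds X T" "open_cover X \<U>" "finite A" "S \<subseteq> A"
  shows "ln (join_cover_number X T \<U> S) \<le> ln (join_cover_number X T \<U> A)"
proof (cases "topspace X = {}")
  case True
  then show ?thesis
    by (simp add: cover_number_empty_space)
next
  case False
  then have "0 < cover_number X (join_cover X T \<U> S)"
    using assms finite_subset by (blast intro: cover_number_join_cover_pos)
  then show ?thesis
    using cover_number_join_cover_mono[OF assms] by simp
qed

lemma int_seq_eq:
  assumes "tds X T" "coeff_system c" "open_cover X \<U>"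
  shows "int_seq c X \<U> T n = 2 * asc_seq c X \<U> T n - cover_entropy_seq X \<U> T n"
proof (cases "n = 0")
  case True
  then show ?thesis
    by (simp add: int_seq_def asc_seq_def cover_entropy_seq_def)
next
  case False
  let ?L = "\<lambda>S. ln (join_cover_number X T \<U> S)"
  have c: "\<And>S. S \<subseteq> {..<n} \<Longrightarrow> c n ({..<n} - S) = c n S" "(\<Sum>S\<in>Pow {..<n}. c n S) = 1"
    using assms(2) False unfolding coeff_system_def by auto
  have "int_seq c X \<U> T n
      = (1 / real n) * (\<Sum>S\<in>Pow {..<n}. c n S * (?L S + ?L ({..<n} - S) - ?L {..<n}))"
    unfolding int_seq_def
    using ln_join_cover_number_split[OF assms(1,3) finite_lessThan] by simp
  also have "\<dots> = (1 / real n) * (2 * (\<Sum>S\<in>Pow {..<n}. c n S * ?L S) - ?L {..<n})"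
    using symmetric_average_complement_split[where w = "c n" and L = ?L, OF c] by simp
  finally show ?thesis
    by (simp add: asc_seq_def cover_entropy_seq_def algebra_simps)
qed

lemma asc_seq_le_cover_entropy_seq:
  assumes "tds X T" "coeff_system c" "open_cover X \<U>"
  shows "asc_seq c X \<U> T n \<le> cover_entropy_seq X \<U> T n"
proof (cases "n = 0")
  case True
  then show ?thesis
    by (simp add: asc_seq_def cover_entropy_seq_def)
next
  case False
  then have "(\<Sum>S\<in>Pow {..<n}. c n S * ln (join_cover_number X T \<U> S))
      \<le> ln (join_cover_number X T \<U> {..<n})"
    using assms(2) ln_join_cover_number_mono[OF assms(1,3) finite_lessThan]
    unfolding coeff_system_def by (intro convex_combination_le) auto
  then show ?thesis
    unfolding asc_seq_def cover_entropy_seq_def by (simp add: divide_right_mono)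
qed

theorem proposition2p10:
  fixes X :: "'a topology" and T :: "'a \<Rightarrow> 'a" and c :: "nat \<Rightarrow> nat set \<Rightarrow> real"
    and \<U> :: "'a set set"
  assumes "tds X T"
    and "coeff_system c"
    and "open_cover X \<U>"
    and "convergent (asc_seq c X \<U> T)"
    and "convergent (int_seq c X \<U> T)"
  shows "ereal (Asc c X \<U> T) \<le> htop X T
         \<and> Int_ent c X \<U> T \<le> htop_cover X \<U> T
         \<and> ereal (htop_cover X \<U> T) \<le> htop X T"
proof -
  obtain a where a: "asc_seq c X \<U> T \<longlonglongrightarrow> a"
    using assms(4) convergent_def by blast
  obtain b where b: "int_seq c X \<U> T \<longlonglongrightarrow> b"
    using assms(5) convergent_def by blast
  have "(\<lambda>n. 2 * asc_seq c X \<U> T n - int_seq c X \<U> T n) \<longlonglongrightarrow> 2 * a - b"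
    using a b by (intro tendsto_intros)
  then have h: "cover_entropy_seq X \<U> T \<longlonglongrightarrow> 2 * a - b"
    using int_seq_eq[OF assms(1-3)] by simp
  have "a \<le> 2 * a - b"
    using a h asc_seq_le_cover_entropy_seq[OF assms(1-3)] by (intro LIMSEQ_le) auto
  moreover have "Asc c X \<U> T = a" "Int_ent c X \<U> T = b" "htop_cover X \<U> T = 2 * a - b"
    using limI[OF a] limI[OF b] limI[OF h]
    by (simp_all add: Asc_def Int_ent_def htop_cover_eq_lim)
  moreover have "ereal (htop_cover X \<U> T) \<le> htop X T"
    using assms(3) by (rule htop_cover_le_htop)
  ultimately show ?thesis
    by (auto intro: order_trans[rotated])
qed

end
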